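(* Let $X_t$, $t=0,1,\dots$, be a Markov chain on the finite state space $\Sigma=\{1,\dots,N\}$ with transition probability matrix $P=[p_{ij}]$ acting on row vectors by $x_{t+1}=x_tP$. Assume that $P$ is diagonalizable and has full rank. Consider a set of linearly independent right eigenvectors $u^{\alpha}$ of $P$, $Pu^{\alpha}=\lambda^{\alpha}u^{\alpha}$, indexed by $\alpha\in I$ where $I\subseteq\Sigma$. Define an equivalence relation on $\Sigma$ by $i\sim j$ if and only if $u^{\alpha}_i=u^{\alpha}_j$ for all $\alpha\in I$, and let $\widetilde{\Sigma}$ be the resulting partition of $\Sigma$ into equivalence classes. Then: (1) If $|\widetilde{\Sigma}|=|I|$, then $\widetilde{\Sigma}$ is a (strong) lumping of the Markov chain. (2) Conversely, if $\widetilde{\Sigma}$ is a partition of $\Sigma$ that is a (strong) lumping of the Markov chain, then there exist $|\widetilde{\Sigma}|$ linearly independent right eigenvectors of $P$ that are invariant under permutations of states within the lumps (i.e., each such eigenvector $y$ satisfies $y_i=y_j$ whenever $i,j$ lie in the same block of $\widetilde{\Sigma}$).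
   Context: A lumping (partition) of $\Sigma$ is $\widetilde{\Sigma}=\{L_1,\dots,L_M\}$ with nonempty, pairwise disjoint blocks $L_k$ whose union is $\Sigma$; it is encoded by the $N\times M$ matrix $\Pi=[\pi_{ik}]$ with $\pi_{ik}=1$ if $i\in L_k$ and $0$ otherwise. The chain is called strongly lumpable with respect to $\widetilde{\Sigma}$ (and $\widetilde{\Sigma}$ is then called a lumping of the chain) if the quotient process $\tilde{x}_t=x_t\Pi$ is a Markov process; equivalently, for all blocks $L_k,L_l$ the quantity $\sum_{j\in L_l}p_{ij}$ is the same for every $i\in L_k$. Right eigenvectors are $N\times 1$ column vectors $u$ with $Pu=\lambda u$. *)

theory Defs
  imports "HOL-Analysis.Analysis"
begin

text \<open>States are the elements of a finite type 'n (Sigma = UNIV, N = CARD('n)).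
  Transition matrices act on row vectors; right eigenvectors are column vectors.\<close>

definition stochastic_matrix :: "real^'n^'n \<Rightarrow> bool" where
  "stochastic_matrix P \<longleftrightarrow> (\<forall>i j. P $ i $ j \<ge> 0) \<and> (\<forall>i. (\<Sum>j\<in>UNIV. P $ i $ j) = 1)"

definition cmat :: "real^'n^'m \<Rightarrow> complex^'n^'m" where
  "cmat P = (\<chi> i j. complex_of_real (P $ i $ j))"

definition diagonalizable :: "real^'n^'n \<Rightarrow> bool" where
  "diagonalizable P \<longleftrightarrow> (\<exists>S D :: complex^'n^'n. invertible S \<and>
      (\<forall>i j. i \<noteq> j \<longrightarrow> D $ i $ j = 0) \<and> cmat P ** S = S ** D)"

definition right_eigenvector :: "real^'n^'n \<Rightarrow> complex \<Rightarrow> complex^'n \<Rightarrow> bool" where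
  "right_eigenvector P lam u \<longleftrightarrow> u \<noteq> 0 \<and> cmat P *v u = lam *s u"

definition lin_indep_family :: "'i set \<Rightarrow> ('i \<Rightarrow> complex^'n) \<Rightarrow> bool" where
  "lin_indep_family A u \<longleftrightarrow>
     (\<forall>c. (\<Sum>a\<in>A. c a *s u a) = 0 \<longrightarrow> (\<forall>a\<in>A. c a = 0))"

definition is_partition :: "'n set set \<Rightarrow> bool" where
  "is_partition Ls \<longleftrightarrow> (\<forall>L\<in>Ls. L \<noteq> {}) \<and>
     (\<forall>K\<in>Ls. \<forall>L\<in>Ls. K \<noteq> L \<longrightarrow> K \<inter> L = {}) \<and> \<Union>Ls = UNIV"

text \<open>Strong lumpability, in the equivalent row-sum form given in the context.\<close>
definition strongly_lumpable :: "real^'n^'n \<Rightarrow> 'n set set \<Rightarrow> bool" where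
  "strongly_lumpable P Ls \<longleftrightarrow> is_partition Ls \<and>
     (\<forall>K\<in>Ls. \<forall>L\<in>Ls. \<forall>i\<in>K. \<forall>j\<in>K. (\<Sum>k\<in>L. P $ i $ k) = (\<Sum>k\<in>L. P $ j $ k))"

definition eigen_classes :: "'n set \<Rightarrow> ('n \<Rightarrow> complex^'n) \<Rightarrow> 'n set set" where
  "eigen_classes I u = range (\<lambda>i. {j. \<forall>a\<in>I. u a $ j = u a $ i})"

end

theory Submission
  imports Defs
begin

text \<open>Let \<open>V\<close> be the space of vectors that are constant on the blocks of a partition
  \<open>\<Sigma>~\<close>; the indicator vectors of the blocks form a basis, so \<open>dim V = |\<Sigma>~|\<close>, and a
  partition is a lumping exactly when \<open>V\<close> is invariant under \<open>P\<close> (the row sums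
  \<open>\<Sum>k\<in>L. p\<^sub>i\<^sub>k\<close> are the entries of \<open>P\<close> applied to the indicator of \<open>L\<close>).

  (1) Every \<open>u\<^sup>\<alpha>\<close> is constant on the classes of \<open>\<sim>\<close>, so \<open>|I|\<close> independent eigenvectors
  lie in \<open>V\<close>; if \<open>|\<Sigma>~| = |I|\<close> they form a basis of \<open>V\<close>, and \<open>V\<close>, being spanned by
  eigenvectors, is invariant.

  (2) Conversely, a \<open>P\<close>-invariant subspace of a diagonalizable \<open>P\<close> is spanned by the
  eigenvectors it contains: the eigencomponents of a vector of \<open>V\<close> lie again in \<open>V\<close>.
  Hence \<open>V\<close> has a basis of \<open>|\<Sigma>~|\<close> eigenvectors, all constant on the blocks.\<close>

lemma vec_independent_image_iff:
  fixes u :: "'i \<Rightarrow> 'a::field^'n"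
  assumes "finite A" and "inj_on u A"
  shows "vec.independent (u ` A) \<longleftrightarrow> (\<forall>c. (\<Sum>a\<in>A. c a *s u a) = 0 \<longrightarrow> (\<forall>a\<in>A. c a = 0))"
proof -
  have reindex: "(\<Sum>v\<in>u ` A. c v *s v) = (\<Sum>a\<in>A. c (u a) *s u a)" for c
    using sum.reindex[OF assms(2)] by (simp add: comp_def)
  show ?thesis
  proof
    assume indep: "vec.independent (u ` A)"
    show "\<forall>c. (\<Sum>a\<in>A. c a *s u a) = 0 \<longrightarrow> (\<forall>a\<in>A. c a = 0)"
    proof (intro allI impI ballI)
      fix c a assume "(\<Sum>a\<in>A. c a *s u a) = 0" and "a \<in> A"
      then have "(\<Sum>v\<in>u ` A. c (inv_into A u v) *s v) = 0"
        by (simp add: reindex assms(2))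
      with indep have "\<forall>v\<in>u ` A. c (inv_into A u v) = 0"
        unfolding vec.independent_explicit by (elim conjE allE[of _ "\<lambda>v. c (inv_into A u v)"]) simp
      with \<open>a \<in> A\<close> have "c (inv_into A u (u a)) = 0" by blast
      with \<open>a \<in> A\<close> show "c a = 0" by (simp add: assms(2))
    qed
  next
    assume H: "\<forall>c. (\<Sum>a\<in>A. c a *s u a) = 0 \<longrightarrow> (\<forall>a\<in>A. c a = 0)"
    show "vec.independent (u ` A)"
      unfolding vec.independent_explicit reindex
    proof (intro conjI allI impI ballI)
      show "finite (u ` A)" using assms(1) by simp
      fix c v assume "(\<Sum>a\<in>A. c (u a) *s u a) = 0" "v \<in> u ` A"
      with H[rule_format, of "\<lambda>a. c (u a)"] show "c v = 0" by blast
    qed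
  qed
qed

lemma lin_indep_family_imp_inj_on:
  assumes "lin_indep_family A u" and "finite A"
  shows "inj_on u A"
proof (rule inj_onI, rule ccontr)
  fix a b assume "a \<in> A" "b \<in> A" "u a = u b" "a \<noteq> b"
  define c where "c x = (if x = a then 1 else if x = b then -1 else 0 :: complex)" for x
  have "(\<Sum>x\<in>A. c x *s u x) = (\<Sum>x\<in>{a, b}. c x *s u x)"
    by (rule sum.mono_neutral_right) (use assms(2) \<open>a \<in> A\<close> \<open>b \<in> A\<close> in \<open>simp_all add: c_def\<close>)
  also have "\<dots> = 0" using \<open>u a = u b\<close> \<open>a \<noteq> b\<close> by (simp add: c_def)
  finally have "c a = 0" using assms(1) \<open>a \<in> A\<close> unfolding lin_indep_family_def by blast
  then show False by (simp add: c_def)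
qed

lemma lin_indep_family_iff:
  assumes "finite A"
  shows "lin_indep_family A u \<longleftrightarrow> inj_on u A \<and> vec.independent (u ` A)"
proof
  assume indep: "lin_indep_family A u"
  then have inj: "inj_on u A" using assms by (rule lin_indep_family_imp_inj_on)
  with indep show "inj_on u A \<and> vec.independent (u ` A)"
    using vec_independent_image_iff[OF assms inj] unfolding lin_indep_family_def by blast
next
  assume "inj_on u A \<and> vec.independent (u ` A)"
  then show "lin_indep_family A u"
    using vec_independent_image_iff[OF assms] unfolding lin_indep_family_def by blast
qed

lemma vec_span_invariant:
  fixes A :: "'a::field^'n^'n"
  assumes "vec.subspace V" and "\<And>b. b \<in> B \<Longrightarrow> A *v b \<in> V" and "x \<in> vec.span B"
  shows "A *v x \<in> V"
proof -
  have "vec.span ((*v) A ` B) \<subseteq> V"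
    using assms(1,2) by (intro vec.span_minimal) auto
  then show ?thesis using assms(3) by (auto simp: vec.span_image)
qed

section \<open>Partitions and block-constant vectors\<close>

lemma is_partition_unique:
  assumes "is_partition Ls" "K \<in> Ls" "L \<in> Ls" "i \<in> K" "i \<in> L"
  shows "K = L"
proof (rule ccontr)
  assume "K \<noteq> L"
  with assms(1-3) have "K \<inter> L = {}" unfolding is_partition_def by blast
  with assms(4,5) show False by blast
qed

lemma is_partition_cover:
  assumes "is_partition Ls"
  obtains L where "L \<in> Ls" "i \<in> L"
proof -
  have "i \<in> \<Union>Ls" using assms unfolding is_partition_def by simp
  then show ?thesis using that by blast
qed

lemma is_partition_nonempty:
  assumes "is_partition Ls" "L \<in> Ls"
  obtains i where "i \<in> L"
proof -
  have "L \<noteq> {}" using assms unfolding is_partition_def by simp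
  then show ?thesis using that by blast
qed

definition block_constant :: "'n set set \<Rightarrow> ('a^'n) set" where
  "block_constant Ls = {x. \<forall>L\<in>Ls. \<forall>i\<in>L. \<forall>j\<in>L. x $ i = x $ j}"

definition indicator_vector :: "'n set \<Rightarrow> 'a::zero_neq_one^'n" where
  "indicator_vector L = (\<chi> i. of_bool (i \<in> L))"

lemma subspace_block_constant: "vec.subspace (block_constant Ls :: ('a::field^'n::finite) set)"
proof (rule vec.subspaceI)
  fix x y :: "'a^'n" and c :: 'a
  assume "x \<in> block_constant Ls" "y \<in> block_constant Ls"
  then show "x + y \<in> block_constant Ls" "c *s x \<in> block_constant Ls"
    unfolding block_constant_def mem_Collect_eq vector_add_component vector_smult_component
    by metis+
qed (simp add: block_constant_def)

lemma indicator_vector_block_constant: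
  assumes "is_partition Ls" "L \<in> Ls"
  shows "indicator_vector L \<in> block_constant Ls"
  unfolding block_constant_def mem_Collect_eq
proof (intro ballI)
  fix K i j assume "K \<in> Ls" "i \<in> K" "j \<in> K"
  then have "i \<in> L \<longleftrightarrow> j \<in> L" using is_partition_unique[OF assms(1) \<open>K \<in> Ls\<close> assms(2)] by blast
  then show "indicator_vector L $ i = indicator_vector L $ j" by (simp add: indicator_vector_def)
qed

lemma inj_on_indicator_vector:
  assumes "is_partition Ls"
  shows "inj_on (indicator_vector :: 'n::finite set \<Rightarrow> 'a::zero_neq_one^'n) Ls"
proof (rule inj_onI)
  fix K L assume K: "K \<in> Ls" and L: "L \<in> Ls"
    and eq: "(indicator_vector K :: 'a^'n) = indicator_vector L"
  obtain i where "i \<in> K" using is_partition_nonempty[OF assms K] .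
  moreover have "(indicator_vector K :: 'a^'n) $ i = indicator_vector L $ i"
    using eq by simp
  ultimately have "i \<in> L" by (simp add: indicator_vector_def)
  with \<open>i \<in> K\<close> show "K = L" using is_partition_unique[OF assms K L] by blast
qed

lemma sum_indicator_vector_nth:
  fixes c :: "'n::finite set \<Rightarrow> 'a::field"
  assumes "is_partition Ls" "L \<in> Ls" "i \<in> L"
  shows "(\<Sum>K\<in>Ls. c K *s indicator_vector K) $ i = c L"
proof -
  have "(\<Sum>K\<in>Ls. c K *s indicator_vector K) $ i = (\<Sum>K\<in>Ls. c K * of_bool (i \<in> K))"
    by (simp add: indicator_vector_def)
  also have "\<dots> = (\<Sum>K\<in>{L}. c K * of_bool (i \<in> K))"
    using is_partition_unique[OF assms(1) _ assms(2) _ assms(3)] assms(2)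
    by (intro sum.mono_neutral_right) auto
  also have "\<dots> = c L" using assms(3) by simp
  finally show ?thesis .
qed

lemma independent_indicator_vectors:
  assumes "is_partition Ls"
  shows "vec.independent ((indicator_vector :: 'n::finite set \<Rightarrow> 'a::field^'n) ` Ls)"
proof (subst vec_independent_image_iff[OF _ inj_on_indicator_vector[OF assms]],
       simp, intro allI impI ballI)
  fix c :: "'n set \<Rightarrow> 'a" and L
  assume "(\<Sum>K\<in>Ls. c K *s indicator_vector K) = 0" and "L \<in> Ls"
  moreover obtain i where "i \<in> L" using is_partition_nonempty[OF assms \<open>L \<in> Ls\<close>] .
  ultimately show "c L = 0" using sum_indicator_vector_nth[OF assms, of L i c] by simp
qed

lemma block_constant_eq_span:
  assumes "is_partition Ls"
  shows "block_constant Ls = vec.span ((indicator_vector :: 'n::finite set \<Rightarrow> 'a::field^'n) ` Ls)"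
proof
  show "vec.span (indicator_vector ` Ls) \<subseteq> (block_constant Ls :: ('a^'n) set)"
    using indicator_vector_block_constant[OF assms]
    by (intro vec.span_minimal subspace_block_constant) auto
next
  show "block_constant Ls \<subseteq> vec.span (indicator_vector ` Ls :: ('a^'n) set)"
  proof
    fix x :: "'a^'n" assume x: "x \<in> block_constant Ls"
    define y where "y = (\<Sum>L\<in>Ls. x $ (SOME i. i \<in> L) *s indicator_vector L)"
    have "x $ i = y $ i" for i
    proof -
      obtain L where L: "L \<in> Ls" "i \<in> L" using is_partition_cover[OF assms] .
      then have "(SOME i. i \<in> L) \<in> L" by (meson someI)
      with x L have "x $ (SOME i. i \<in> L) = x $ i"
        unfolding block_constant_def by blast
      with sum_indicator_vector_nth[OF assms L, of "\<lambda>K. x $ (SOME i. i \<in> K)"]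
      show ?thesis unfolding y_def by simp
    qed
    then have "x = y" by (simp add: vec_eq_iff)
    moreover have "y \<in> vec.span (indicator_vector ` Ls)"
      unfolding y_def by (intro vec.span_sum vec.span_scale vec.span_base) auto
    ultimately show "x \<in> vec.span (indicator_vector ` Ls)" by simp
  qed
qed

lemma dim_block_constant:
  assumes "is_partition Ls"
  shows "vec.dim (block_constant Ls :: ('a::field^'n::finite) set) = card Ls"
proof -
  have "vec.dim (vec.span ((indicator_vector :: 'n set \<Rightarrow> 'a^'n) ` Ls)) = card Ls"
    using vec.dim_span_eq_card_independent[OF independent_indicator_vectors[OF assms, where 'a='a]]
      card_image[OF inj_on_indicator_vector[OF assms, where 'a='a]] by simp
  then show ?thesis by (simp add: block_constant_eq_span[OF assms])
qed

lemma matrix_vector_mult_indicator_vector_nth: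
  fixes A :: "'a::semiring_1^'n::finite^'n"
  shows "(A *v indicator_vector L) $ i = (\<Sum>k\<in>L. A $ i $ k)"
  by (simp add: matrix_vector_mult_def indicator_vector_def if_distrib cong: if_cong)

lemma strongly_lumpable_iff_invariant:
  fixes P :: "real^'n::finite^'n"
  assumes "is_partition Ls"
  shows "strongly_lumpable P Ls \<longleftrightarrow>
    (\<forall>x \<in> block_constant Ls. cmat P *v x \<in> block_constant Ls)"
proof -
  have row_sum: "(cmat P *v indicator_vector L) $ i = complex_of_real (\<Sum>k\<in>L. P $ i $ k)"
    for L i
    by (simp add: matrix_vector_mult_indicator_vector_nth cmat_def)
  have "strongly_lumpable P Ls \<longleftrightarrow>
      (\<forall>L\<in>Ls. cmat P *v indicator_vector L \<in> block_constant Ls)"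
    using assms
    unfolding strongly_lumpable_def block_constant_def mem_Collect_eq row_sum of_real_eq_iff
    by blast
  also have "\<dots> \<longleftrightarrow> (\<forall>x \<in> block_constant Ls. cmat P *v x \<in> block_constant Ls)"
  proof
    assume "\<forall>L\<in>Ls. cmat P *v indicator_vector L \<in> block_constant Ls"
    then show "\<forall>x \<in> block_constant Ls. cmat P *v x \<in> block_constant Ls"
      using vec_span_invariant[OF subspace_block_constant, of "indicator_vector ` Ls" "cmat P"]
      unfolding block_constant_eq_span[OF assms, symmetric] by blast
  qed (use indicator_vector_block_constant[OF assms] in blast)
  finally show ?thesis .
qed

section \<open>Lumping from eigenvectors\<close>

lemma is_partition_eigen_classes: "is_partition (eigen_classes I u)"
  unfolding is_partition_def
proof (intro conjI ballI impI)
  show "L \<noteq> {}" if "L \<in> eigen_classes I u" for L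
    using that unfolding eigen_classes_def by blast
  show "\<Union>(eigen_classes I u) = UNIV"
    unfolding eigen_classes_def by blast
  fix K L assume "K \<in> eigen_classes I u" "L \<in> eigen_classes I u" "K \<noteq> L"
  then obtain r s where K: "K = {j. \<forall>a\<in>I. u a $ j = u a $ r}"
    and L: "L = {j. \<forall>a\<in>I. u a $ j = u a $ s}"
    unfolding eigen_classes_def by blast
  show "K \<inter> L = {}"
  proof (rule ccontr)
    assume "K \<inter> L \<noteq> {}"
    then obtain x where "\<forall>a\<in>I. u a $ x = u a $ r" "\<forall>a\<in>I. u a $ x = u a $ s"
      using K L by blast
    then have "\<forall>a\<in>I. u a $ r = u a $ s" by metis
    then have "K = L" unfolding K L by metis
    with \<open>K \<noteq> L\<close> show False ..
  qed
qed

lemma eigenvector_block_constant: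
  assumes "a \<in> I"
  shows "u a \<in> block_constant (eigen_classes I u)"
  unfolding block_constant_def mem_Collect_eq
proof (intro ballI)
  fix L i j assume "L \<in> eigen_classes I u" "i \<in> L" "j \<in> L"
  then obtain r where "L = {j. \<forall>a\<in>I. u a $ j = u a $ r}"
    unfolding eigen_classes_def by blast
  with \<open>i \<in> L\<close> \<open>j \<in> L\<close> assms show "u a $ i = u a $ j" by simp
qed

lemma strongly_lumpable_eigen_classes:
  fixes P :: "real^'n::finite^'n" and u :: "'n \<Rightarrow> complex^'n"
  assumes eig: "\<forall>a\<in>I. right_eigenvector P (lam a) (u a)"
    and indep: "lin_indep_family I u"
    and card: "card (eigen_classes I u) = card I"
  shows "strongly_lumpable P (eigen_classes I u)"
proof -
  let ?C = "eigen_classes I u" and ?U = "u ` I"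
  have part: "is_partition ?C" by (rule is_partition_eigen_classes)
  have inj: "inj_on u I" and indep_U: "vec.independent ?U"
    using indep lin_indep_family_iff[of I u] by simp_all
  have U_C: "?U \<subseteq> block_constant ?C" using eigenvector_block_constant by blast
  have "vec.dim (block_constant ?C :: (complex^'n) set) = card ?C"
    by (rule dim_block_constant[OF part])
  then have "vec.dim (block_constant ?C :: (complex^'n) set) \<le> card ?U"
    using card card_image[OF inj] by simp
  then have C_span: "block_constant ?C \<subseteq> vec.span ?U"
    by (rule vec.card_ge_dim_independent[OF U_C indep_U])
  have "cmat P *v x \<in> block_constant ?C" if "x \<in> block_constant ?C" for x
  proof (rule vec_span_invariant[OF subspace_block_constant])
    fix v assume "v \<in> ?U"
    then obtain a where "a \<in> I" "v = u a" by blast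
    then show "cmat P *v v \<in> block_constant ?C"
      using eig eigenvector_block_constant[of a I u]
        vec.subspace_scale[OF subspace_block_constant]
      by (simp add: right_eigenvector_def)
  qed (use C_span that in blast)
  then show ?thesis using strongly_lumpable_iff_invariant[OF part] by blast
qed

section \<open>Eigenvectors from a lumping\<close>

lemma eigencomponents_in_invariant_subspace:
  fixes A :: "'a::field^'n^'n"
  assumes V: "vec.subspace V" and inv: "\<And>x. x \<in> V \<Longrightarrow> A *v x \<in> V" and "finite Lam"
    and "\<forall>l\<in>Lam. A *v w l = l *s w l" and "(\<Sum>l\<in>Lam. w l) \<in> V"
  shows "\<forall>l\<in>Lam. w l \<in> V"
  using assms(3-)
proof (induction Lam arbitrary: w rule: finite_induct)
  case empty
  then show ?case by simp
next
  case (insert m Lam)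
  let ?x = "w m + (\<Sum>l\<in>Lam. w l)"
  have eigen: "\<forall>l\<in>Lam. A *v w l = l *s w l" "A *v w m = m *s w m"
    using insert.prems(1) by auto
  have x: "?x \<in> V" using insert by simp
  \<comment> \<open>\<open>A - m\<close> kills the component \<open>w m\<close> and rescales the others by \<open>l - m \<noteq> 0\<close>.\<close>
  have "A *v ?x - m *s ?x = (\<Sum>l\<in>Lam. (l - m) *s w l)"
    using eigen by (simp add: vec.add vec.sum vec.scale_right_distrib vec.scale_sum_right
        vec.scale_left_diff_distrib sum_subtractf)
  moreover have "A *v ?x - m *s ?x \<in> V"
    by (intro vec.subspace_diff[OF V] inv x vec.subspace_scale[OF V])
  moreover have "\<forall>l\<in>Lam. A *v ((l - m) *s w l) = l *s ((l - m) *s w l)"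
    using eigen(1) by (metis vec.scale vec.scale_left_commute)
  ultimately have "\<forall>l\<in>Lam. (l - m) *s w l \<in> V"
    using insert.IH[of "\<lambda>l. (l - m) *s w l"] by simp
  then have rest: "\<forall>l\<in>Lam. w l \<in> V"
    using insert.hyps(2) vec.subspace_scale[OF V, of _ "inverse (l - m)" for l]
    by (metis (no_types, lifting) right_minus_eq vec.scale_one vec.scale_scale
        left_inverse)
  then have "(\<Sum>l\<in>Lam. w l) \<in> V" by (intro vec.subspace_sum[OF V]) blast
  then have "?x - (\<Sum>l\<in>Lam. w l) \<in> V" by (rule vec.subspace_diff[OF V x])
  then have "w m \<in> V" by simp
  with rest show ?case by simp
qed

lemma column_matrix_mult_diagonal:
  fixes S D :: "'a::field^'n^'n"
  assumes "\<forall>i j. i \<noteq> j \<longrightarrow> D $ i $ j = 0"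
  shows "column j (S ** D) = D $ j $ j *s column j S"
proof -
  have "(S ** D) $ i $ j = S $ i $ j * D $ j $ j" for i
  proof -
    have "(S ** D) $ i $ j = (\<Sum>k\<in>UNIV. S $ i $ k * D $ k $ j)"
      by (simp add: matrix_matrix_mult_def)
    also have "\<dots> = (\<Sum>k\<in>{j}. S $ i $ k * D $ k $ j)"
      by (rule sum.mono_neutral_right) (use assms in auto)
    finally show ?thesis by simp
  qed
  then show ?thesis by (simp add: column_def vec_eq_iff mult.commute)
qed

lemma diagonalizable_eigenvector_expansion:
  fixes A S D :: "'a::field^'n^'n"
  assumes S: "invertible S" and D: "\<forall>i j. i \<noteq> j \<longrightarrow> D $ i $ j = 0"
    and AS: "A ** S = S ** D"
  shows "A *v column j S = D $ j $ j *s column j S"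
    and "\<exists>c. v = (\<Sum>j\<in>UNIV. c j *s column j S)"
proof -
  have "A *v column j S = column j (A ** S)"
    by (simp add: column_def matrix_vector_mult_def matrix_matrix_mult_def vec_eq_iff)
  then show "A *v column j S = D $ j $ j *s column j S"
    by (simp add: AS column_matrix_mult_diagonal[OF D])
  obtain S' where "S ** S' = mat 1" using S unfolding invertible_def by blast
  then have "v = S *v (S' *v v)" by (simp add: matrix_vector_mul_assoc)
  then show "\<exists>c. v = (\<Sum>j\<in>UNIV. c j *s column j S)" by (metis matrix_mult_sum)
qed

lemma invariant_subspace_eigenvector_span:
  fixes A S D :: "'a::field^'n^'n"
  assumes S: "invertible S" and D: "\<forall>i j. i \<noteq> j \<longrightarrow> D $ i $ j = 0"
    and AS: "A ** S = S ** D"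
    and V: "vec.subspace V" and inv: "\<And>x. x \<in> V \<Longrightarrow> A *v x \<in> V"
  shows "V \<subseteq> vec.span {w \<in> V. \<exists>l. A *v w = l *s w}"
proof
  fix v assume "v \<in> V"
  let ?d = "\<lambda>j. D $ j $ j" and ?E = "{w \<in> V. \<exists>l. A *v w = l *s w}"
  obtain c where c: "v = (\<Sum>j\<in>UNIV. c j *s column j S)"
    using diagonalizable_eigenvector_expansion(2)[OF assms(1-3)] by blast
  define w where "w l = (\<Sum>j | ?d j = l. c j *s column j S)" for l
  have v_w: "v = (\<Sum>l\<in>range ?d. w l)"
    unfolding c w_def using sum.image_gen[of UNIV "\<lambda>j. c j *s column j S" ?d] by simp
  have w_eigen: "\<forall>l\<in>range ?d. A *v w l = l *s w l"
    using diagonalizable_eigenvector_expansion(1)[OF assms(1-3)]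
    by (simp add: w_def vec.sum vec.scale vec.scale_sum_right mult.commute)
  have "\<forall>l\<in>range ?d. w l \<in> V"
    by (rule eigencomponents_in_invariant_subspace[OF V inv _ w_eigen])
      (use \<open>v \<in> V\<close> v_w in simp_all)
  with w_eigen have "\<forall>l\<in>range ?d. w l \<in> vec.span ?E"
    by (blast intro: vec.span_base)
  then show "v \<in> vec.span ?E" unfolding v_w by (blast intro: vec.span_sum)
qed

lemma strongly_lumpable_eigenvectors:
  fixes P :: "real^'n::finite^'n"
  assumes diag: "diagonalizable P" and part: "is_partition Ls" and lump: "strongly_lumpable P Ls"
  obtains v mu where "lin_indep_family Ls v"
    and "\<forall>L\<in>Ls. right_eigenvector P (mu L) (v L)"
    and "\<forall>L\<in>Ls. v L \<in> block_constant Ls"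
proof -
  let ?V = "block_constant Ls :: (complex^'n) set"
  let ?E = "{w \<in> ?V. \<exists>l. cmat P *v w = l *s w}"
  obtain S D :: "complex^'n^'n" where S: "invertible S" and D: "\<forall>i j. i \<noteq> j \<longrightarrow> D $ i $ j = 0"
    and PS: "cmat P ** S = S ** D"
    using diag unfolding diagonalizable_def by blast
  have "?V \<subseteq> vec.span ?E"
    by (rule invariant_subspace_eigenvector_span[OF S D PS subspace_block_constant])
      (use strongly_lumpable_iff_invariant[OF part] lump in blast)
  obtain B where B_E: "B \<subseteq> ?E" and indep: "vec.independent B" and "?E \<subseteq> vec.span B"
    by (rule vec.maximal_independent_subset)
  then have "vec.span ?E \<subseteq> vec.span B" by (intro vec.span_minimal vec.subspace_span)
  with \<open>?V \<subseteq> vec.span ?E\<close> have "card B = vec.dim ?V"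
    using B_E indep by (intro vec.basis_card_eq_dim) auto
  also have "\<dots> = card Ls" by (rule dim_block_constant[OF part])
  finally have "\<exists>f. bij_betw f Ls B"
    by (intro finite_same_card_bij) (simp_all add: vec.finiteI_independent[OF indep])
  then obtain f where f: "bij_betw f Ls B" ..
  define mu where "mu L = (SOME l. cmat P *v f L = l *s f L)" for L
  show thesis
  proof
    have "inj_on f Ls" "f ` Ls = B"
      using f by (simp_all add: bij_betw_def)
    with indep show "lin_indep_family Ls f" by (simp add: lin_indep_family_iff)
    show "\<forall>L\<in>Ls. right_eigenvector P (mu L) (f L)"
    proof
      fix L assume "L \<in> Ls"
      then have "f L \<in> B" using f by (rule bij_betw_apply[rotated])
      moreover have "0 \<notin> B" using indep vec.dependent_zero by blast
      ultimately have "f L \<noteq> 0" and eigen: "\<exists>l. cmat P *v f L = l *s f L"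
        using B_E by auto
      then show "right_eigenvector P (mu L) (f L)"
        unfolding right_eigenvector_def mu_def using someI_ex[OF eigen] by blast
    qed
    show "\<forall>L\<in>Ls. f L \<in> block_constant Ls"
      using bij_betw_apply[OF f] B_E by blast
  qed
qed

theorem theorem2:
  fixes P :: "real^'n^'n"
    and I :: "'n set"
    and u :: "'n \<Rightarrow> complex^'n"
    and lam :: "'n \<Rightarrow> complex"
  assumes stoch: "stochastic_matrix P"
    and diag: "diagonalizable P"
    and full_rank: "invertible P"
    and eig: "\<forall>a\<in>I. right_eigenvector P (lam a) (u a)"
    and indep: "lin_indep_family I u"
  shows "(card (eigen_classes I u) = card I \<longrightarrow> strongly_lumpable P (eigen_classes I u))
    \<and> (\<forall>Ls. is_partition Ls \<and> strongly_lumpable P Ls \<longrightarrow>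
          (\<exists>v :: 'n set \<Rightarrow> complex^'n. \<exists>mu :: 'n set \<Rightarrow> complex.
             lin_indep_family Ls v \<and>
             (\<forall>L\<in>Ls. right_eigenvector P (mu L) (v L)) \<and>
             (\<forall>L\<in>Ls. \<forall>K\<in>Ls. \<forall>i\<in>K. \<forall>j\<in>K. v L $ i = v L $ j)))"
proof (intro conjI impI allI)
  show "strongly_lumpable P (eigen_classes I u)" if "card (eigen_classes I u) = card I"
    using strongly_lumpable_eigen_classes[OF eig indep that] .
next
  fix Ls assume "is_partition Ls \<and> strongly_lumpable P Ls"
  then obtain v mu where "lin_indep_family Ls v" "\<forall>L\<in>Ls. right_eigenvector P (mu L) (v L)"
    "\<forall>L\<in>Ls. v L \<in> block_constant Ls"
    using strongly_lumpable_eigenvectors[OF diag] by blast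
  then show "\<exists>v mu. lin_indep_family Ls v \<and> (\<forall>L\<in>Ls. right_eigenvector P (mu L) (v L)) \<and>
      (\<forall>L\<in>Ls. \<forall>K\<in>Ls. \<forall>i\<in>K. \<forall>j\<in>K. v L $ i = v L $ j)"
    unfolding block_constant_def by blast
qed

end
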